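(* Consider the multicast coalitional game with player set $\mathcal{N}=\{1,\ldots,N\}$, $N\ge2$, and value function $$v(S)=\sum_{i\in S}U_i-\sum_{i\in S}\frac{\alpha_i}{R_S}-\frac{\beta+\gamma}{R_S},\qquad R_S=\min_{i\in S}R_i,$$ for nonempty $S\subseteq\mathcal{N}$. Suppose $P_{Rx,i}=P_{Rx}$ for all $i$, so that $\alpha_i=\alpha:=aP_{Rx}X$ for all $i$. Let $R_k=\min_iR_i$ and $R_m=\max_iR_i$, and write $R_m=\mu R_k$ with $\mu\ge1$. If $$\mu>1+\frac{\beta+\gamma}{\alpha},$$ then the core is empty.
   Context: A transmitter multicasts a file of size $X>0$ bits to users $\mathcal{N}=\{1,\dots,N\}$. User $i$ has valuation $U_i\in\mathbb{R}$, downloads at rate $R_i>0$, and consumes receive power $P_{Rx,i}>0$; the transmitter transmits at power $P_{Tx}>0$. Costs per unit energy are $a>0$ at users and $b>0$ at the transmitter; bandwidth cost per second is $w>0$. Set $\alpha_i=aP_{Rx,i}X$, $\beta=bP_{Tx}X$, $\gamma=wX$. The core is the set of payoff vectors $(x_1,\dots,x_N)\in\mathbb{R}^N$ with $\sum_{i\in\mathcal{N}}x_i=v(\mathcal{N})$ and $\sum_{i\in S}x_i\ge v(S)$ for every nonempty $S\subseteq\mathcal{N}$. *)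

theory Defs
  imports Main "HOL.Real"
begin

definition coalition_rate :: "(nat \<Rightarrow> real) \<Rightarrow> nat set \<Rightarrow> real" where
  "coalition_rate R S = Min (R ` S)"

definition mc_value ::
  "(nat \<Rightarrow> real) \<Rightarrow> (nat \<Rightarrow> real) \<Rightarrow> real \<Rightarrow> real \<Rightarrow> (nat \<Rightarrow> real) \<Rightarrow> nat set \<Rightarrow> real" where
  "mc_value U alpha beta gamma R S =
     (\<Sum>i\<in>S. U i) - (\<Sum>i\<in>S. alpha i / coalition_rate R S) - (beta + gamma) / coalition_rate R S"

definition core :: "nat set \<Rightarrow> (nat set \<Rightarrow> real) \<Rightarrow> (nat \<Rightarrow> real) set" where
  "core Ns v = {x. (\<forall>i. i \<notin> Ns \<longrightarrow> x i = 0) \<and> (\<Sum>i\<in>Ns. x i) = v Ns \<and>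
     (\<forall>S. S \<subseteq> Ns \<and> S \<noteq> {} \<longrightarrow> (\<Sum>i\<in>S. x i) \<ge> v S)}"

end

theory Submission
  imports Defs
begin

text \<open>If the core contained a payoff vector x, then splitting the grand coalition into the
  fastest user m and the rest would give v(N) = x(N) = x{m} + x(N - {m}) \<ge> v{m} + v(N - {m}).
  The rest still contains the slowest user, so it keeps the rate R_k of the grand coalition,
  while m alone is served at rate R_m. Hence v{m} + v(N - {m}) - v(N) = \<alpha>/R_k - (\<alpha> + \<beta> + \<gamma>)/R_m,
  which is positive exactly when \<mu> > 1 + (\<beta> + \<gamma>)/\<alpha>.\<close>

lemma core_empty_if_not_superadditive:
  assumes "finite Ns" "S \<subseteq> Ns" "S \<noteq> {}" "Ns - S \<noteq> {}"
    and "v Ns < v S + v (Ns - S)"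
  shows "core Ns v = {}"
proof (rule ccontr)
  assume "core Ns v \<noteq> {}"
  then obtain x where "x \<in> core Ns v" by blast
  then have "sum x Ns = v Ns" "v S \<le> sum x S" "v (Ns - S) \<le> sum x (Ns - S)"
    using assms(2-4) unfolding core_def by auto
  moreover have "sum x Ns = sum x S + sum x (Ns - S)"
    using assms(1,2) by (metis add.commute sum.subset_diff)
  ultimately show False using assms(5) by linarith
qed

lemma coalition_rate_singleton [simp]: "coalition_rate R {i} = R i"
  by (simp add: coalition_rate_def)

lemma coalition_rate_subset_eq:
  assumes "finite S" "T \<subseteq> S" "k \<in> T" "R k = Min (R ` S)"
  shows "coalition_rate R T = R k"
proof -
  have "Min (R ` T) \<le> R k" using assms by (meson Min_le finite_imageI finite_subset imageI)
  moreover have "R k \<le> Min (R ` T)" using assms by (metis Min_antimono empty_iff image_is_empty image_mono finite_imageI)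
  ultimately show ?thesis by (simp add: coalition_rate_def)
qed

lemma mc_value_split_off_player:
  assumes "finite S" "m \<in> S" "coalition_rate R (S - {m}) = coalition_rate R S"
  shows "mc_value U alpha beta gamma R {m} + mc_value U alpha beta gamma R (S - {m})
           - mc_value U alpha beta gamma R S
         = alpha m / coalition_rate R S - (alpha m + (beta + gamma)) / R m"
proof -
  have "(\<Sum>i\<in>S. f i) = f m + (\<Sum>i\<in>S - {m}. f i)" for f :: "nat \<Rightarrow> real"
    using assms(1,2) by (rule sum.remove)
  then show ?thesis
    unfolding mc_value_def assms(3) by (simp add: add_divide_distrib)
qed

lemma mc_core_empty_if_fastest_player_gains:
  assumes "finite S" "k \<in> S" "m \<in> S" "k \<noteq> m" "R k = Min (R ` S)"
    and "(alpha m + (beta + gamma)) / R m < alpha m / R k"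
  shows "core S (mc_value U alpha beta gamma R) = {}"
proof -
  let ?v = "mc_value U alpha beta gamma R"
  have "coalition_rate R (S - {m}) = R k" "coalition_rate R S = R k"
    using coalition_rate_subset_eq[OF assms(1) _ _ assms(5)] assms(2,4) by blast+
  then have "?v {m} + ?v (S - {m}) - ?v S = alpha m / R k - (alpha m + (beta + gamma)) / R m"
    using mc_value_split_off_player[OF assms(1,3)] by simp
  then have "?v S < ?v {m} + ?v (S - {m})" using assms(6) by linarith
  moreover have "S - {m} \<noteq> {}" using assms(2,4) by blast
  ultimately show ?thesis
    using assms(1,3) by (intro core_empty_if_not_superadditive) auto
qed

lemma ratio_gt_imp_divide_less:
  fixes r s al c :: real
  assumes "0 < r" "0 < al" "0 \<le> c" "s / r > 1 + c / al"
  shows "(al + c) / s < al / r"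
proof -
  have "s / r > (al + c) / al" using assms(2,4) by (simp add: add_divide_distrib)
  then have "al * s > (al + c) * r" using assms(1,2) by (simp add: field_simps)
  moreover have "s > 0"
    using assms by (smt (verit, best) divide_nonneg_nonneg divide_nonpos_pos)
  ultimately show ?thesis using assms(1) by (simp add: field_simps)
qed

theorem theorem6:
  fixes N :: nat and U R PRx :: "nat \<Rightarrow> real"
    and a b w X PTx P :: real
  assumes "N \<ge> 2"
    and "X > 0" and "a > 0" and "b > 0" and "w > 0" and "PTx > 0"
    and "\<forall>i\<in>{1..N}. R i > 0"
    and "\<forall>i\<in>{1..N}. PRx i > 0"
    and "\<forall>i\<in>{1..N}. PRx i = P"
    and "Max (R ` {1..N}) / Min (R ` {1..N}) > 1 + (b * PTx * X + w * X) / (a * P * X)"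
  shows "core {1..N} (mc_value U (\<lambda>i. a * PRx i * X) (b * PTx * X) (w * X) R) = {}"
proof -
  define A where "A = {1..N}"
  have fin: "finite A" and ne: "A \<noteq> {}" using assms(1) by (auto simp: A_def)
  have "Min (R ` A) \<in> R ` A" "Max (R ` A) \<in> R ` A" using fin ne by simp_all
  then obtain k m where k: "k \<in> A" "R k = Min (R ` A)" and m: "m \<in> A" "R m = Max (R ` A)"
    by (metis imageE)
  have "P > 0" using assms(1,8,9) by force
  then have gain: "(a * P * X + (b * PTx * X + w * X)) / R m < a * P * X / R k"
    using assms(2-7,10) k m by (intro ratio_gt_imp_divide_less) (auto simp: A_def)
  have "k \<noteq> m"
  proof
    assume "k = m"
    have "0 < R m" using m(1) assms(7) by (simp add: A_def)
    moreover have "0 < b * PTx * X + w * X" using assms(2,4-6) by (simp add: add_pos_pos)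
    ultimately show False using gain \<open>k = m\<close> by (simp add: divide_less_cancel)
  qed
  moreover have "PRx m = P" using assms(9) m(1) by (simp add: A_def)
  ultimately show ?thesis
    unfolding A_def[symmetric] using gain
    by (intro mc_core_empty_if_fastest_player_gains[OF fin k(1) m(1) _ k(2)]) simp_all
qed

end
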